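(* A PAF $\psi:\mathcal P^N\to\mathcal P$ is Level-SP and anonymous if and only if there exist $n+1$ weakly increasing, right-continuous functions $f_0,f_1,\dots,f_n:\Lambda\to[0,1]$ such that: (i) $f_k\le f_{k+1}$ pointwise for all $0\le k\le n-1$; (ii) if $\sup\Lambda\notin\Lambda$ then $\lim_{a\to\sup\Lambda}f_n(a)=1$, and otherwise $f_n(\sup\Lambda)=1$; (iii) if $\inf\Lambda\notin\Lambda$ then $\lim_{a\to\inf\Lambda}f_0(a)=0$; (iv) the associated CAF satisfies, for all $\mathbf P\in\mathcal C^N$ and $a\in\Lambda$, $$\Psi(\mathbf P)(a)=\operatorname{median}\big(P_1(a),\dots,P_n(a),f_0(a),\dots,f_n(a)\big).$$ Moreover, $\psi$ is unanimous if and only if such functions can be chosen with $f_0(a)=0$ and $f_n(a)=1$ for all $a\in\Lambda$.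
   Context: Let $N=\{1,\dots,n\}$ be a finite set of experts and $\Lambda\subseteq\mathbb R$ a nonempty Borel set with the usual order. $\mathcal P$ denotes the set of Borel probability measures on $\Lambda$ and $\mathcal C$ the set of CDFs on $\Lambda$; $\pi(p)(a)=p(\{x\in\Lambda:x\le a\})$. A PAF is a map $\psi:\mathcal P^N\to\mathcal P$; its associated CAF $\Psi:\mathcal C^N\to\mathcal C$ is defined by $\Psi(\pi(p_1),\dots,\pi(p_n))=\pi(\psi(p_1,\dots,p_n))$; $P_i=\pi(p_i)$, $\mathbf P=(P_1,\dots,P_n)$. $\mathbf z_{-i}(z_i')$ denotes the profile $\mathbf z$ with its $i$-th coordinate replaced by $z_i'$. $\psi$ is Level-SP if for every $i$, $\mathbf P\in\mathcal C^N$, $P_i'\in\mathcal C$, $a\in\Lambda$: $P_i(a)<\Psi(\mathbf P)(a)\Rightarrow\Psi(\mathbf P)(a)\le\Psi(\mathbf P_{-i}(P_i'))(a)$ and $P_i(a)>\Psi(\mathbf P)(a)\Rightarrow\Psi(\mathbf P)(a)\ge\Psi(\mathbf P_{-i}(P_i'))(a)$. $\psi$ is anonymous if $\psi(p_{\sigma(1)},\dots,p_{\sigma(n)})=\psi(p_1,\dots,p_n)$ for every permutation $\sigma$ of $N$ and every profile; unanimous if $\psi(p,\dots,p)=p$ for all $p$. The median of $2n+1$ real numbers is the $(n+1)$-th smallest. *)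

theory Defs
  imports "HOL-Probability.Probability"
begin

definition prob_measures :: "real set \<Rightarrow> real measure set" where
  "prob_measures Lam = {M. prob_space M \<and> space M = Lam \<and> sets M = sets (restrict_space borel Lam)}"

text \<open>The CDF map pi: pi(p)(a) = p({x in Lam. x <= a}); only meaningful for a in Lam.\<close>
definition cdf_on :: "real set \<Rightarrow> real measure \<Rightarrow> real \<Rightarrow> real" where
  "cdf_on Lam M a = measure M {x \<in> Lam. x \<le> a}"

definition profiles :: "nat \<Rightarrow> real set \<Rightarrow> (nat \<Rightarrow> real measure) set" where
  "profiles n Lam = PiE {1..n} (\<lambda>_. prob_measures Lam)"

definition is_PAF :: "nat \<Rightarrow> real set \<Rightarrow> ((nat \<Rightarrow> real measure) \<Rightarrow> real measure) \<Rightarrow> bool" where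
  "is_PAF n Lam psi \<longleftrightarrow> (\<forall>p \<in> profiles n Lam. psi p \<in> prob_measures Lam)"

text \<open>Level strategy-proofness, with the CAF Psi(pi p_1,...,pi p_n) = pi(psi p) unfolded.\<close>
definition level_SP :: "nat \<Rightarrow> real set \<Rightarrow> ((nat \<Rightarrow> real measure) \<Rightarrow> real measure) \<Rightarrow> bool" where
  "level_SP n Lam psi \<longleftrightarrow>
    (\<forall>i \<in> {1..n}. \<forall>p \<in> profiles n Lam. \<forall>q \<in> prob_measures Lam. \<forall>a \<in> Lam.
       (cdf_on Lam (p i) a < cdf_on Lam (psi p) a \<longrightarrow>
          cdf_on Lam (psi p) a \<le> cdf_on Lam (psi (p(i := q))) a) \<and>
       (cdf_on Lam (p i) a > cdf_on Lam (psi p) a \<longrightarrow>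
          cdf_on Lam (psi p) a \<ge> cdf_on Lam (psi (p(i := q))) a))"

definition anonymous :: "nat \<Rightarrow> real set \<Rightarrow> ((nat \<Rightarrow> real measure) \<Rightarrow> real measure) \<Rightarrow> bool" where
  "anonymous n Lam psi \<longleftrightarrow>
    (\<forall>\<sigma>. \<sigma> permutes {1..n} \<longrightarrow>
       (\<forall>p \<in> profiles n Lam. psi (\<lambda>i \<in> {1..n}. p (\<sigma> i)) = psi p))"

definition unanimous :: "nat \<Rightarrow> real set \<Rightarrow> ((nat \<Rightarrow> real measure) \<Rightarrow> real measure) \<Rightarrow> bool" where
  "unanimous n Lam psi \<longleftrightarrow> (\<forall>q \<in> prob_measures Lam. psi (\<lambda>i \<in> {1..n}. q) = q)"

definition median :: "real list \<Rightarrow> real" where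
  "median xs = sort xs ! (length xs div 2)"

definition phantom_conds ::
  "nat \<Rightarrow> real set \<Rightarrow> ((nat \<Rightarrow> real measure) \<Rightarrow> real measure) \<Rightarrow> (nat \<Rightarrow> real \<Rightarrow> real) \<Rightarrow> bool" where
  "phantom_conds n Lam psi f \<longleftrightarrow>
    (\<forall>k \<le> n. (\<forall>a \<in> Lam. 0 \<le> f k a \<and> f k a \<le> 1)
       \<and> (\<forall>a \<in> Lam. \<forall>b \<in> Lam. a \<le> b \<longrightarrow> f k a \<le> f k b)
       \<and> (\<forall>a \<in> Lam. (f k \<longlongrightarrow> f k a) (at a within (Lam \<inter> {a<..}))))
    \<and> (\<forall>k < n. \<forall>a \<in> Lam. f k a \<le> f (Suc k) a)
    \<and> (bdd_above Lam \<and> Sup Lam \<in> Lam \<longrightarrow> f n (Sup Lam) = 1)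
    \<and> (bdd_above Lam \<and> Sup Lam \<notin> Lam \<longrightarrow> (f n \<longlongrightarrow> 1) (at (Sup Lam) within Lam))
    \<and> (\<not> bdd_above Lam \<longrightarrow> (f n \<longlongrightarrow> 1) (at_top \<sqinter> principal Lam))
    \<and> (bdd_below Lam \<and> Inf Lam \<notin> Lam \<longrightarrow> (f 0 \<longlongrightarrow> 0) (at (Inf Lam) within Lam))
    \<and> (\<not> bdd_below Lam \<longrightarrow> (f 0 \<longlongrightarrow> 0) (at_bot \<sqinter> principal Lam))
    \<and> (\<forall>p \<in> profiles n Lam. \<forall>a \<in> Lam.
         cdf_on Lam (psi p) a =
           median (map (\<lambda>i. cdf_on Lam (p i) a) [1..<n+1] @ map (\<lambda>k. f k a) [0..<n+1]))"

end

theory Submission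
  imports Defs
begin

(* If the outcome at a is the median of the experts' values P_i(a) and of n+1 fixed numbers
   f_0(a) <= ... <= f_n(a), then changing a value that lies below the median cannot lower it and
   changing one above it cannot raise it, which is Level-SP; the median is symmetric in the
   experts, which is anonymity.

   Conversely, Level-SP forces the outcome at a to depend only on the values P_i(a): an expert
   switching to a report with the same value at a could otherwise profitably switch back.
   Anonymity then makes it depend only on the multiset of these values. Let f_k(a) be the outcome
   at a when k experts put all their mass at a and the others strictly above a. Sending the
   experts above the outcome y to value 1 and the rest to value 0 shows f_U(a) <= y, U the number
   of values above y; sending those below y to 0 and the rest to 1 shows y <= f_W(a), W the number
   of values at least y. Together with the monotonicity of k |-> f_k(a) this says that y is the
   median. Monotonicity, right-continuity and the limits of the f_k are inherited from CDFs. *)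

section \<open>Medians\<close>

lemma sorted_le_nth_iff:
  fixes xs :: "'a::linorder list"
  assumes "sorted xs" "k < length xs"
  shows "y \<le> xs ! k \<longleftrightarrow> length (filter (\<lambda>x. x < y) xs) \<le> k"
proof
  assume "y \<le> xs ! k"
  then have "\<forall>x \<in> set (drop k xs). \<not> x < y"
    using assms by (auto simp: in_set_conv_nth)
      (metis add.commute le_add2 less_diff_conv not_le order.trans sorted_nth_mono)
  then have "filter (\<lambda>x. x < y) xs = filter (\<lambda>x. x < y) (take k xs)"
    by (metis append_Nil2 append_take_drop_id filter_False filter_append)
  then show "length (filter (\<lambda>x. x < y) xs) \<le> k"
    by (metis length_filter_le length_take min.bounded_iff)
next
  assume "length (filter (\<lambda>x. x < y) xs) \<le> k"
  show "y \<le> xs ! k"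
  proof (rule ccontr)
    assume "\<not> y \<le> xs ! k"
    then have "\<forall>x \<in> set (take (Suc k) xs). x < y"
      using assms by (auto simp: in_set_conv_nth)
        (metis less_Suc_eq_le not_le order.strict_trans2 sorted_nth_mono)
    then have "length (filter (\<lambda>x. x < y) (take (Suc k) xs)) = Suc k"
      using assms(2) by simp
    then show False
      using \<open>length (filter (\<lambda>x. x < y) xs) \<le> k\<close>
      by (metis append_take_drop_id filter_append le_add1 length_append not_less_eq_eq)
  qed
qed

lemma sorted_nth_le_iff:
  fixes xs :: "'a::linorder list"
  assumes "sorted xs" "k < length xs"
  shows "xs ! k \<le> y \<longleftrightarrow> length (filter (\<lambda>x. y < x) xs) \<le> length xs - Suc k"
proof
  assume "xs ! k \<le> y"
  then have "\<forall>x \<in> set (take (Suc k) xs). \<not> y < x"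
    using assms by (auto simp: in_set_conv_nth)
      (metis less_Suc_eq_le not_le order.trans sorted_nth_mono)
  then have "filter (\<lambda>x. y < x) xs = filter (\<lambda>x. y < x) (drop (Suc k) xs)"
    by (metis append_take_drop_id filter_False filter_append self_append_conv2)
  then show "length (filter (\<lambda>x. y < x) xs) \<le> length xs - Suc k"
    by (metis length_drop length_filter_le)
next
  assume "length (filter (\<lambda>x. y < x) xs) \<le> length xs - Suc k"
  show "xs ! k \<le> y"
  proof (rule ccontr)
    assume "\<not> xs ! k \<le> y"
    then have "\<forall>x \<in> set (drop k xs). y < x"
      using assms by (auto simp: in_set_conv_nth)
        (metis add.commute le_add2 less_diff_conv not_le order.strict_trans1 sorted_nth_mono)
    then have "length (filter (\<lambda>x. y < x) (drop k xs)) = length xs - k"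
      by simp
    moreover have "length (filter (\<lambda>x. y < x) xs) \<ge> length (filter (\<lambda>x. y < x) (drop k xs))"
      by (metis append_take_drop_id filter_append le_add2 length_append)
    ultimately show False
      using \<open>length (filter (\<lambda>x. y < x) xs) \<le> length xs - Suc k\<close> assms(2) by linarith
  qed
qed

lemma length_filter_sort: "length (filter P (sort xs)) = length (filter P xs)"
  by (metis mset_filter mset_sort size_mset)

lemma le_median_iff:
  "length xs = 2 * k + 1 \<Longrightarrow> y \<le> median xs \<longleftrightarrow> length (filter (\<lambda>x. x < y) xs) \<le> k"
  using sorted_le_nth_iff[of "sort xs" k y] by (simp add: median_def length_filter_sort)

lemma median_le_iff:
  "length xs = 2 * k + 1 \<Longrightarrow> median xs \<le> y \<longleftrightarrow> length (filter (\<lambda>x. y < x) xs) \<le> k"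
  using sorted_nth_le_iff[of "sort xs" k y] by (simp add: median_def length_filter_sort)

lemma median_mset_cong: "mset xs = mset ys \<Longrightarrow> median xs = median ys"
  unfolding median_def by (metis mset_eq_length sorted_list_of_multiset_mset)

lemma length_filter_map_upt: "length (filter P (map f [a..<b])) = card {i \<in> {a..<b}. P (f i)}"
proof -
  have "length (filter P (map f [a..<b])) = card ({i. P (f i)} \<inter> set [a..<b])"
    by (simp add: filter_map distinct_length_filter comp_def)
  also have "{i. P (f i)} \<inter> set [a..<b] = {i \<in> {a..<b}. P (f i)}"
    by auto
  finally show ?thesis .
qed

lemma card_less_mono_le:
  fixes f :: "nat \<Rightarrow> 'a::linorder"
  assumes mono: "\<And>j k. j \<le> k \<Longrightarrow> k \<le> n \<Longrightarrow> f j \<le> f k" and "y \<le> f m"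
  shows "card {k \<in> {0..<n+1}. f k < y} \<le> m"
proof -
  have "{k \<in> {0..<n+1}. f k < y} \<subseteq> {0..<m}"
  proof
    fix k assume "k \<in> {k \<in> {0..<n+1}. f k < y}"
    with \<open>y \<le> f m\<close> mono[of m k] show "k \<in> {0..<m}"
      by (cases "m \<le> k") auto
  qed
  then show ?thesis
    using card_mono[of "{0..<m}"] by fastforce
qed

lemma card_greater_mono_le:
  fixes f :: "nat \<Rightarrow> 'a::linorder"
  assumes mono: "\<And>j k. j \<le> k \<Longrightarrow> k \<le> n \<Longrightarrow> f j \<le> f k" and "f m \<le> y" "m \<le> n"
  shows "card {k \<in> {0..<n+1}. y < f k} \<le> n - m"
proof -
  have "{k \<in> {0..<n+1}. y < f k} \<subseteq> {m<..<n+1}"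
  proof
    fix k assume "k \<in> {k \<in> {0..<n+1}. y < f k}"
    with \<open>f m \<le> y\<close> \<open>m \<le> n\<close> mono[of k m] show "k \<in> {m<..<n+1}"
      by (cases "k \<le> m") auto
  qed
  then show ?thesis
    using card_mono[of "{m<..<n+1}"] by fastforce
qed

lemma median_phantoms_eqI:
  fixes x f :: "nat \<Rightarrow> real"
  assumes mono: "\<And>j k. j \<le> k \<Longrightarrow> k \<le> n \<Longrightarrow> f j \<le> f k"
    and lower: "f (card {i \<in> {1..n}. y < x i}) \<le> y"
    and upper: "y \<le> f (card {i \<in> {1..n}. y \<le> x i})"
  shows "median (map x [1..<n+1] @ map f [0..<n+1]) = y"
proof -
  let ?xs = "map x [1..<n+1] @ map f [0..<n+1]"
  define U where "U = card {i \<in> {1..n}. y < x i}"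
  define W where "W = card {i \<in> {1..n}. y \<le> x i}"
  have experts: "{1..<n+1} = {1..n}"
    by auto
  have "U \<le> n"
    using card_mono[of "{1..n}" "{i \<in> {1..n}. y < x i}"] by (simp add: U_def subset_iff)
  have "card {i \<in> {1..n}. x i < y} + W = card ({i \<in> {1..n}. x i < y} \<union> {i \<in> {1..n}. y \<le> x i})"
    unfolding W_def by (rule card_Un_disjoint[symmetric]) auto
  also have "{i \<in> {1..n}. x i < y} \<union> {i \<in> {1..n}. y \<le> x i} = {1..n}"
    by auto
  finally have "card {i \<in> {1..n}. x i < y} + W = n"
    by simp
  then have "length (filter (\<lambda>v. v < y) ?xs) \<le> n"
    using card_less_mono_le[where f = f and n = n, OF mono upper]
    unfolding filter_append length_append length_filter_map_upt experts W_def by linarith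
  moreover have "length (filter (\<lambda>v. y < v) ?xs) \<le> n"
    using card_greater_mono_le[where f = f and n = n, OF mono lower] \<open>U \<le> n\<close>
    unfolding filter_append length_append length_filter_map_upt experts U_def by linarith
  moreover have "length ?xs = 2 * n + 1"
    by simp
  ultimately show ?thesis
    using le_median_iff[of ?xs n y] median_le_iff[of ?xs n y] by (meson order_antisym)
qed

lemma image_mset_zero_one_eqI:
  fixes f g :: "'a \<Rightarrow> 'b::zero_neq_one"
  assumes "finite A" "f ` A \<subseteq> {0, 1}" "g ` A \<subseteq> {0, 1}"
    and "card {i \<in> A. f i = 1} = card {i \<in> A. g i = 1}"
  shows "image_mset f (mset_set A) = image_mset g (mset_set A)"
proof (rule multiset_eqI)
  have zeros: "card {i \<in> A. h i = 0} = card A - card {i \<in> A. h i = 1}" if "h ` A \<subseteq> {0, 1}" for h :: "'a \<Rightarrow> 'b"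
  proof -
    have "{i \<in> A. h i = 0} = A - {i \<in> A. h i = 1}"
      using that by auto
    then show ?thesis
      using \<open>finite A\<close> by (simp add: card_Diff_subset)
  qed
  fix v :: 'b
  show "count (image_mset f (mset_set A)) v = count (image_mset g (mset_set A)) v"
  proof (cases "v = 0 \<or> v = 1")
    case True
    then show ?thesis
      using assms zeros[of f] zeros[of g] by (auto simp: count_image_mset_eq_card_vimage)
  next
    case False
    then have "{i \<in> A. f i = v} = {}" "{i \<in> A. g i = v} = {}"
      using assms(2,3) by auto
    then show ?thesis
      by (metis count_image_mset_eq_card_vimage[OF assms(1)])
  qed
qed

section \<open>CDFs of probability measures on \<open>Lam\<close>\<close>

lemma prob_measuresD:
  assumes "M \<in> prob_measures Lam"
  shows "prob_space M" "space M = Lam" "sets M = sets (restrict_space borel Lam)"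
  using assms by (auto simp: prob_measures_def)

(* Pushing M forward to the whole real line gives access to the library's theory of CDFs. *)
definition borel_law :: "real measure \<Rightarrow> real measure" where
  "borel_law M = distr M borel (\<lambda>x. x)"

lemma measurable_ident_borel:
  assumes "M \<in> prob_measures Lam"
  shows "(\<lambda>x. x) \<in> M \<rightarrow>\<^sub>M borel"
  using measurable_cong_sets[OF prob_measuresD(3)[OF assms] refl]
    measurable_restrict_space1[OF measurable_ident_sets[OF refl]]
  by blast

lemma real_distribution_borel_law:
  "M \<in> prob_measures Lam \<Longrightarrow> real_distribution (borel_law M)"
  unfolding borel_law_def
  by (rule prob_space.real_distribution_distr[OF prob_measuresD(1) measurable_ident_borel])

lemma emeasure_borel_law:
  assumes "M \<in> prob_measures Lam" "A \<in> sets borel"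
  shows "emeasure (borel_law M) A = emeasure M (A \<inter> Lam)"
  using assms prob_measuresD(2)[OF assms(1)]
  by (simp add: borel_law_def emeasure_distr[OF measurable_ident_borel] Int_commute)

lemma measure_borel_law:
  assumes "M \<in> prob_measures Lam" "A \<in> sets borel"
  shows "measure (borel_law M) A = measure M (A \<inter> Lam)"
  using emeasure_borel_law[OF assms] by (simp add: measure_def)

lemma cdf_borel_law: "M \<in> prob_measures Lam \<Longrightarrow> cdf (borel_law M) = cdf_on Lam M"
  by (auto simp: cdf_def cdf_on_def measure_borel_law Collect_conj_eq Int_commute atMost_def)

lemma cdf_on_nonneg: "M \<in> prob_measures Lam \<Longrightarrow> 0 \<le> cdf_on Lam M a"
  by (simp add: cdf_on_def)

lemma cdf_on_le_one: "M \<in> prob_measures Lam \<Longrightarrow> cdf_on Lam M a \<le> 1"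
  by (simp add: cdf_on_def prob_space.prob_le_1 prob_measuresD(1))

lemma cdf_on_mono: "M \<in> prob_measures Lam \<Longrightarrow> a \<le> b \<Longrightarrow> cdf_on Lam M a \<le> cdf_on Lam M b"
  using finite_borel_measure.cdf_nondecreasing[OF real_distribution.finite_borel_measure_M,
      OF real_distribution_borel_law]
  by (simp add: cdf_borel_law)

lemma cdf_on_right_continuous:
  "M \<in> prob_measures Lam \<Longrightarrow> (cdf_on Lam M \<longlongrightarrow> cdf_on Lam M a) (at_right a)"
  using finite_borel_measure.cdf_is_right_cont[OF real_distribution.finite_borel_measure_M,
      OF real_distribution_borel_law]
  by (simp add: cdf_borel_law continuous_within)

lemma tendsto_cdf_on_at_left:
  "M \<in> prob_measures Lam \<Longrightarrow> (cdf_on Lam M \<longlongrightarrow> measure M {y \<in> Lam. y < s}) (at_left s)"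
  using finite_borel_measure.cdf_at_left[OF real_distribution.finite_borel_measure_M,
      OF real_distribution_borel_law]
  by (simp add: cdf_borel_law measure_borel_law Collect_conj_eq Int_commute lessThan_def)

lemma tendsto_cdf_on_at_top: "M \<in> prob_measures Lam \<Longrightarrow> (cdf_on Lam M \<longlongrightarrow> 1) at_top"
  using real_distribution.cdf_lim_at_top_prob[OF real_distribution_borel_law]
  by (simp add: cdf_borel_law)

lemma tendsto_cdf_on_at_bot: "M \<in> prob_measures Lam \<Longrightarrow> (cdf_on Lam M \<longlongrightarrow> 0) at_bot"
  using finite_borel_measure.cdf_lim_at_bot[OF real_distribution.finite_borel_measure_M,
      OF real_distribution_borel_law]
  by (simp add: cdf_borel_law)

lemma tendsto_cdf_on_Sup:
  assumes M: "M \<in> prob_measures Lam" and "bdd_above Lam" "Sup Lam \<notin> Lam"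
  shows "(cdf_on Lam M \<longlongrightarrow> 1) (at (Sup Lam) within Lam)"
proof -
  have below: "Lam \<subseteq> {..<Sup Lam}"
    using assms(2,3) cSup_upper by (fastforce simp: order_le_less)
  then have "{y \<in> Lam. y < Sup Lam} = space M"
    using prob_measuresD(2)[OF M] by auto
  then have "(cdf_on Lam M \<longlongrightarrow> 1) (at_left (Sup Lam))"
    using tendsto_cdf_on_at_left[OF M, of "Sup Lam"] prob_space.prob_space[OF prob_measuresD(1)[OF M]]
    by simp
  then show ?thesis
    using at_le[OF below] filterlim_mono by blast
qed

lemma tendsto_cdf_on_Inf:
  assumes M: "M \<in> prob_measures Lam" and "bdd_below Lam" "Inf Lam \<notin> Lam"
  shows "(cdf_on Lam M \<longlongrightarrow> 0) (at (Inf Lam) within Lam)"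
proof -
  have above: "Lam \<subseteq> {Inf Lam<..}"
    using assms(2,3) cInf_lower by (fastforce simp: order_le_less)
  then have "{y \<in> Lam. y \<le> Inf Lam} = {}"
    by auto
  then have "cdf_on Lam M (Inf Lam) = 0"
    unfolding cdf_on_def by (metis measure_empty)
  then show ?thesis
    using cdf_on_right_continuous[OF M, of "Inf Lam"] at_le[OF above] by (simp add: filterlim_mono)
qed

lemma cdf_on_at_max:
  assumes "M \<in> prob_measures Lam" "a \<in> Lam" "\<not> (\<exists>b\<in>Lam. a < b)"
  shows "cdf_on Lam M a = 1"
proof -
  have "{y \<in> Lam. y \<le> a} = space M"
    using assms prob_measuresD(2)[OF assms(1)] by (auto simp: not_less)
  then show ?thesis
    using prob_space.prob_space[OF prob_measuresD(1)[OF assms(1)]] by (simp add: cdf_on_def)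
qed

lemma tendsto_cdf_on_Sup_atMost:
  assumes M: "M \<in> prob_measures Lam" and S: "S = {y \<in> Lam. y \<le> x}" "S \<noteq> {}" "Sup S \<notin> Lam"
  shows "(cdf_on Lam M \<longlongrightarrow> cdf_on Lam M x) (at (Sup S) within S)"
proof -
  have bdd: "bdd_above S"
    using S(1) by (auto intro: bdd_aboveI[of _ x])
  have "Sup S \<le> x"
    using S(1,2) by (auto intro!: cSup_least)
  have below: "S = {y \<in> Lam. y < Sup S}"
  proof
    show "S \<subseteq> {y \<in> Lam. y < Sup S}"
      using cSup_upper[OF _ bdd] S(1,3) by (fastforce simp: order_le_less)
    show "{y \<in> Lam. y < Sup S} \<subseteq> S"
      using \<open>Sup S \<le> x\<close> S(1) by auto
  qed
  have "cdf_on Lam M x = measure M S"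
    by (simp add: cdf_on_def S(1))
  also have "\<dots> = measure M {y \<in> Lam. y < Sup S}"
    using below by (rule arg_cong)
  finally have "(cdf_on Lam M \<longlongrightarrow> cdf_on Lam M x) (at_left (Sup S))"
    using tendsto_cdf_on_at_left[OF M] by simp
  moreover have "S \<subseteq> {..<Sup S}"
    using below by blast
  ultimately show ?thesis
    using at_le filterlim_mono by blast
qed

lemma cdf_on_eq_if_eq_on:
  assumes M: "M \<in> prob_measures Lam" and N: "N \<in> prob_measures Lam"
    and eq: "\<And>a. a \<in> Lam \<Longrightarrow> cdf_on Lam M a = cdf_on Lam N a"
  shows "cdf_on Lam M x = cdf_on Lam N x"
proof -
  define S where "S = {y \<in> Lam. y \<le> x}"
  have "bdd_above S"
    by (auto simp: S_def intro: bdd_aboveI[of _ x])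
  consider "S = {}" | "S \<noteq> {}" "Sup S \<in> Lam" | "S \<noteq> {}" "Sup S \<notin> Lam"
    by blast
  then show ?thesis
  proof cases
    case 1
    then show ?thesis
      by (simp add: cdf_on_def S_def[symmetric])
  next
    case 2
    have "Sup S \<le> x"
      using 2(1) by (auto simp: S_def intro!: cSup_least)
    have "{y \<in> Lam. y \<le> x} = {y \<in> Lam. y \<le> Sup S}"
    proof
      show "{y \<in> Lam. y \<le> x} \<subseteq> {y \<in> Lam. y \<le> Sup S}"
        using cSup_upper[OF _ \<open>bdd_above S\<close>] by (auto simp: S_def)
      show "{y \<in> Lam. y \<le> Sup S} \<subseteq> {y \<in> Lam. y \<le> x}"
        using \<open>Sup S \<le> x\<close> by auto
    qed
    then have "cdf_on Lam K x = cdf_on Lam K (Sup S)" for K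
      unfolding cdf_on_def by simp
    then show ?thesis
      by (simp only: eq[OF 2(2)])
  next
    case 3
    have "Sup S \<in> closure (S - {Sup S})"
      using closure_contains_Sup[OF 3(1) \<open>bdd_above S\<close>] 3(2) by (simp add: S_def)
    then have nontrivial: "at (Sup S) within S \<noteq> bot"
      by (simp add: at_within_eq_bot_iff)
    have "\<forall>\<^sub>F y in at (Sup S) within S. cdf_on Lam M y = cdf_on Lam N y"
      using eq by (auto simp: eventually_at_filter S_def)
    then have "(cdf_on Lam N \<longlongrightarrow> cdf_on Lam M x) (at (Sup S) within S)"
      by (rule Lim_transform_eventually[OF tendsto_cdf_on_Sup_atMost[OF M S_def 3]])
    then show ?thesis
      using tendsto_unique[OF nontrivial _ tendsto_cdf_on_Sup_atMost[OF N S_def 3]] by blast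
  qed
qed

lemma prob_measures_eqI:
  assumes Lam: "Lam \<in> sets borel" and M: "M \<in> prob_measures Lam" and N: "N \<in> prob_measures Lam"
    and eq: "\<And>a. a \<in> Lam \<Longrightarrow> cdf_on Lam M a = cdf_on Lam N a"
  shows "M = N"
proof (rule measure_eqI)
  show "sets M = sets N"
    using prob_measuresD(3)[OF M] prob_measuresD(3)[OF N] by simp
  have "borel_law M = borel_law N"
    by (rule cdf_unique[OF real_distribution_borel_law[OF M] real_distribution_borel_law[OF N]])
      (use cdf_on_eq_if_eq_on[OF M N eq] in \<open>simp add: cdf_borel_law[OF M] cdf_borel_law[OF N] fun_eq_iff\<close>)
  fix A assume "A \<in> sets M"
  then have "A \<subseteq> Lam" "A \<in> sets borel"
    using sets.sets_into_space[of A M] prob_measuresD[OF M] Lam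
    by (auto simp: sets_restrict_space_iff)
  then show "emeasure M A = emeasure N A"
    using emeasure_borel_law[OF M] emeasure_borel_law[OF N] \<open>borel_law M = borel_law N\<close>
    by (metis Int_absorb2)
qed

definition point_mass :: "real set \<Rightarrow> real \<Rightarrow> real measure" where
  "point_mass Lam c = return (restrict_space borel Lam) c"

lemma point_mass_in_prob_measures: "c \<in> Lam \<Longrightarrow> point_mass Lam c \<in> prob_measures Lam"
  unfolding prob_measures_def point_mass_def
  by (auto intro!: prob_space_return simp: space_restrict_space)

lemma cdf_on_point_mass:
  assumes "Lam \<in> sets borel" "c \<in> Lam"
  shows "cdf_on Lam (point_mass Lam c) a = (if c \<le> a then 1 else 0)"
proof -
  have "{y \<in> Lam. y \<le> a} \<in> sets (restrict_space borel Lam)"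
    using assms(1) by (subst sets_restrict_space_iff) auto
  then show ?thesis
    using assms(2) by (simp add: cdf_on_def point_mass_def measure_return indicator_def)
qed

lemma profile_apply: "p \<in> profiles n Lam \<Longrightarrow> i \<in> {1..n} \<Longrightarrow> p i \<in> prob_measures Lam"
  by (auto simp: profiles_def)

lemma profile_restrictI:
  "(\<And>i. i \<in> {1..n} \<Longrightarrow> q i \<in> prob_measures Lam) \<Longrightarrow> (\<lambda>i\<in>{1..n}. q i) \<in> profiles n Lam"
  by (auto simp: profiles_def)

lemma profile_updateI:
  "p \<in> profiles n Lam \<Longrightarrow> i \<in> {1..n} \<Longrightarrow> q \<in> prob_measures Lam \<Longrightarrow> p(i := q) \<in> profiles n Lam"
  by (auto simp: profiles_def PiE_iff extensional_def)

lemma profile_override_onI: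
  assumes "p \<in> profiles n Lam" "S \<subseteq> {1..n}" "\<And>i. i \<in> S \<Longrightarrow> q i \<in> prob_measures Lam"
  shows "override_on p q S \<in> profiles n Lam"
  using assms by (auto simp: profiles_def PiE_iff extensional_def override_on_def)

lemma override_on_profiles:
  "p \<in> profiles n Lam \<Longrightarrow> p' \<in> profiles n Lam \<Longrightarrow> override_on p p' {1..n} = p'"
  by (auto simp: profiles_def PiE_iff extensional_def override_on_def)

lemma override_on_restore: "override_on (override_on p q S) p S = p"
  by (simp add: override_on_def fun_eq_iff)

section \<open>The median formula implies Level-SP, anonymity and unanimity\<close>

locale paf =
  fixes n :: nat and Lam :: "real set" and psi :: "(nat \<Rightarrow> real measure) \<Rightarrow> real measure"
  assumes Lam_borel: "Lam \<in> sets borel" and PAF: "is_PAF n Lam psi"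
begin

abbreviation Psi :: "(nat \<Rightarrow> real measure) \<Rightarrow> real \<Rightarrow> real" where
  "Psi p \<equiv> cdf_on Lam (psi p)"

lemma psi_in_prob_measures: "p \<in> profiles n Lam \<Longrightarrow> psi p \<in> prob_measures Lam"
  using PAF by (simp add: is_PAF_def)

lemma phantom_conds_median:
  assumes "phantom_conds n Lam psi f" "p \<in> profiles n Lam" "a \<in> Lam"
  shows "Psi p a = median (map (\<lambda>i. cdf_on Lam (p i) a) [1..<n+1] @ map (\<lambda>k. f k a) [0..<n+1])"
proof -
  have "\<forall>p\<in>profiles n Lam. \<forall>a\<in>Lam.
      Psi p a = median (map (\<lambda>i. cdf_on Lam (p i) a) [1..<n+1] @ map (\<lambda>k. f k a) [0..<n+1])"
    using assms(1) unfolding phantom_conds_def by (elim conjE) assumption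
  then show ?thesis
    using assms(2,3) by blast
qed

lemma phantom_conds_mono:
  assumes f: "phantom_conds n Lam psi f" and a: "a \<in> Lam" and "j \<le> k" "k \<le> n"
  shows "f j a \<le> f k a"
  using \<open>j \<le> k\<close> \<open>k \<le> n\<close>
proof (induction k rule: dec_induct)
  case (step m)
  have "\<forall>k<n. \<forall>a\<in>Lam. f k a \<le> f (Suc k) a"
    using f unfolding phantom_conds_def by (elim conjE) assumption
  then have "f m a \<le> f (Suc m) a"
    using step a by simp
  with step show ?case
    by simp
qed simp

lemma level_SP_if_phantom_conds:
  assumes f: "phantom_conds n Lam psi f"
  shows "level_SP n Lam psi"
  unfolding level_SP_def
proof (intro ballI conjI impI)
  fix i p q a
  assume i: "i \<in> {1..n}" and p: "p \<in> profiles n Lam" and q: "q \<in> prob_measures Lam" and a: "a \<in> Lam"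
  let ?list = "\<lambda>p. map (\<lambda>j. cdf_on Lam (p j) a) [1..<n+1] @ map (\<lambda>k. f k a) [0..<n+1]"
  have len: "length (?list p) = 2 * n + 1" "length (?list (p(i := q))) = 2 * n + 1"
    by simp_all
  have median: "Psi p a = median (?list p)" "Psi (p(i := q)) a = median (?list (p(i := q)))"
    using phantom_conds_median[OF f _ a] p profile_updateI[OF p i q] by simp_all
  have count: "length (filter P (?list (p(i := q)))) \<le> length (filter P (?list p))"
    if "P (cdf_on Lam (p i) a)" for P
  proof -
    have "card {j \<in> {1..<n+1}. P (cdf_on Lam ((p(i := q)) j) a)} \<le> card {j \<in> {1..<n+1}. P (cdf_on Lam (p j) a)}"
      using that by (intro card_mono) auto
    then show ?thesis
      by (simp only: filter_append length_append length_filter_map_upt)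
  qed
  show "Psi p a \<le> Psi (p(i := q)) a" if "cdf_on Lam (p i) a < Psi p a"
    using count[of "\<lambda>x. x < Psi p a"] that le_median_iff[OF len(1), of "Psi p a"]
      le_median_iff[OF len(2), of "Psi p a"] median by simp
  show "Psi (p(i := q)) a \<le> Psi p a" if "Psi p a < cdf_on Lam (p i) a"
    using count[of "\<lambda>x. Psi p a < x"] that median_le_iff[OF len(1), of "Psi p a"]
      median_le_iff[OF len(2), of "Psi p a"] median by simp
qed

lemma anonymous_if_phantom_conds:
  assumes f: "phantom_conds n Lam psi f"
  shows "anonymous n Lam psi"
  unfolding anonymous_def
proof (intro allI impI ballI)
  fix \<sigma> p assume \<sigma>: "\<sigma> permutes {1..n}" and p: "p \<in> profiles n Lam"
  define r where "r = (\<lambda>i\<in>{1..n}. p (\<sigma> i))"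
  have r: "r \<in> profiles n Lam"
    unfolding r_def by (rule profile_restrictI) (use permutes_in_image[OF \<sigma>] profile_apply[OF p] in blast)
  have "Psi r a = Psi p a" if a: "a \<in> Lam" for a
  proof -
    have "image_mset (\<lambda>i. cdf_on Lam (r i) a) (mset_set {1..n}) = image_mset (\<lambda>i. cdf_on Lam (p i) a) (mset_set {1..n})"
      using \<sigma> by (intro permutes_implies_image_mset_eq[symmetric]) (simp_all add: r_def)
    then have "mset (map (\<lambda>i. cdf_on Lam (r i) a) [1..<n+1]) = mset (map (\<lambda>i. cdf_on Lam (p i) a) [1..<n+1])"
      by (metis mset_map mset_upt atLeastLessThanSuc_atLeastAtMost Suc_eq_plus1)
    then show ?thesis
      using phantom_conds_median[OF f r a] phantom_conds_median[OF f p a]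
      by (metis median_mset_cong mset_append)
  qed
  then show "psi r = psi p"
    by (intro prob_measures_eqI[OF Lam_borel] psi_in_prob_measures r p)
qed

lemma unanimous_if_phantom_conds:
  assumes f: "phantom_conds n Lam psi f" and extremes: "\<forall>a\<in>Lam. f 0 a = 0 \<and> f n a = 1"
  shows "unanimous n Lam psi"
  unfolding unanimous_def
proof
  fix q assume q: "q \<in> prob_measures Lam"
  define p where "p = (\<lambda>i\<in>{1..n}. q)"
  have p: "p \<in> profiles n Lam"
    unfolding p_def by (rule profile_restrictI) (rule q)
  have "Psi p a = cdf_on Lam q a" if a: "a \<in> Lam" for a
  proof -
    have none: "{i \<in> {1..n}. cdf_on Lam q a < cdf_on Lam (p i) a} = {}"
      and all: "{i \<in> {1..n}. cdf_on Lam q a \<le> cdf_on Lam (p i) a} = {1..n}"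
      by (auto simp: p_def)
    have "median (map (\<lambda>i. cdf_on Lam (p i) a) [1..<n+1] @ map (\<lambda>k. f k a) [0..<n+1]) = cdf_on Lam q a"
    proof (rule median_phantoms_eqI)
      show "f j a \<le> f k a" if "j \<le> k" "k \<le> n" for j k
        using phantom_conds_mono[OF f a that] .
      show "f (card {i \<in> {1..n}. cdf_on Lam q a < cdf_on Lam (p i) a}) a \<le> cdf_on Lam q a"
        unfolding none using extremes a cdf_on_nonneg[OF q] by simp
      show "cdf_on Lam q a \<le> f (card {i \<in> {1..n}. cdf_on Lam q a \<le> cdf_on Lam (p i) a}) a"
        unfolding all using extremes a cdf_on_le_one[OF q] by simp
    qed
    then show ?thesis
      using phantom_conds_median[OF f p a] by simp
  qed
  then show "psi p = q"
    by (intro prob_measures_eqI[OF Lam_borel] psi_in_prob_measures p q)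
qed

end

section \<open>Level-SP aggregators and their phantoms\<close>

locale level_sp_paf = paf +
  assumes level_SP: "level_SP n Lam psi"
begin

definition step_profile :: "real \<Rightarrow> real \<Rightarrow> nat \<Rightarrow> nat \<Rightarrow> real measure" where
  "step_profile c b k = (\<lambda>i\<in>{1..n}. point_mass Lam (if i \<le> k then c else b))"

text \<open>The phantom \<open>f\<^sub>k(a)\<close> is the outcome at \<open>a\<close> when \<open>k\<close> experts put all their mass at \<open>a\<close> and the
  others at some point above \<open>a\<close> (by Level-SP the choice does not matter); at the maximum of \<open>Lam\<close>
  every CDF equals \<open>1\<close>.\<close>
definition phantom :: "nat \<Rightarrow> real \<Rightarrow> real" where
  "phantom k a = (if \<exists>b\<in>Lam. a < b then Psi (step_profile a (SOME b. b \<in> Lam \<and> a < b) k) a else 1)"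

lemma step_profile_in_profiles: "c \<in> Lam \<Longrightarrow> b \<in> Lam \<Longrightarrow> step_profile c b k \<in> profiles n Lam"
  unfolding step_profile_def by (rule profile_restrictI) (simp add: point_mass_in_prob_measures)

lemma cdf_on_step_profile:
  assumes "i \<in> {1..n}" "c \<in> Lam" "b \<in> Lam" "c \<le> x" "x < b"
  shows "cdf_on Lam (step_profile c b k i) x = (if i \<le> k then 1 else 0)"
  using assms by (simp add: step_profile_def cdf_on_point_mass[OF Lam_borel])

lemma phantom_at_max: "\<not> (\<exists>b\<in>Lam. a < b) \<Longrightarrow> phantom k a = 1"
  by (simp add: phantom_def)

lemma phantom_nonneg: "a \<in> Lam \<Longrightarrow> 0 \<le> phantom k a"
  using someI_ex[of "\<lambda>b. b \<in> Lam \<and> a < b"]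
  by (auto simp: phantom_def intro!: cdf_on_nonneg psi_in_prob_measures step_profile_in_profiles)

lemma phantom_le_one: "a \<in> Lam \<Longrightarrow> phantom k a \<le> 1"
  using someI_ex[of "\<lambda>b. b \<in> Lam \<and> a < b"]
  by (auto simp: phantom_def intro!: cdf_on_le_one psi_in_prob_measures step_profile_in_profiles)

lemma Psi_update_ge:
  assumes "p \<in> profiles n Lam" "i \<in> {1..n}" "q \<in> prob_measures Lam" "a \<in> Lam"
    and "cdf_on Lam (p i) a < Psi p a"
  shows "Psi p a \<le> Psi (p(i := q)) a"
  using level_SP assms unfolding level_SP_def by blast

lemma Psi_update_le:
  assumes "p \<in> profiles n Lam" "i \<in> {1..n}" "q \<in> prob_measures Lam" "a \<in> Lam"
    and "Psi p a < cdf_on Lam (p i) a"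
  shows "Psi (p(i := q)) a \<le> Psi p a"
  using level_SP assms unfolding level_SP_def by blast

text \<open>Otherwise one of the two reports could profitably deviate to the other.\<close>
lemma Psi_update_eq:
  assumes p: "p \<in> profiles n Lam" and i: "i \<in> {1..n}" and q: "q \<in> prob_measures Lam"
    and a: "a \<in> Lam" and eq: "cdf_on Lam q a = cdf_on Lam (p i) a"
  shows "Psi (p(i := q)) a = Psi p a"
proof -
  have p': "p(i := q) \<in> profiles n Lam"
    by (rule profile_updateI[OF p i q])
  have restore: "(p(i := q))(i := p i) = p"
    by simp
  show ?thesis
    using Psi_update_ge[OF p i q a] Psi_update_le[OF p i q a]
      Psi_update_ge[OF p' i profile_apply[OF p i] a] Psi_update_le[OF p' i profile_apply[OF p i] a]
    unfolding restore using eq by fastforce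
qed

lemma Psi_eq_if_values_eq:
  assumes p: "p \<in> profiles n Lam" and p': "p' \<in> profiles n Lam" and a: "a \<in> Lam"
    and eq: "\<And>i. i \<in> {1..n} \<Longrightarrow> cdf_on Lam (p' i) a = cdf_on Lam (p i) a"
  shows "Psi p' a = Psi p a"
proof -
  have "Psi (override_on p p' S) a = Psi p a" if "S \<subseteq> {1..n}" for S
    using finite_subset[OF that finite_atLeastAtMost] that
  proof (induction S rule: finite_induct)
    case (insert j S)
    have r: "override_on p p' S \<in> profiles n Lam"
      using insert.prems by (intro profile_override_onI[OF p] profile_apply[OF p']) auto
    have j: "j \<in> {1..n}"
      using insert.prems by simp
    have "Psi (override_on p p' (insert j S)) a = Psi ((override_on p p' S)(j := p' j)) a"
      by (simp only: override_on_insert)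
    also have "\<dots> = Psi (override_on p p' S) a"
      using Psi_update_eq[OF r j profile_apply[OF p' j] a] eq[OF j] insert.hyps(2) by simp
    finally show ?case
      using insert by simp
  qed simp
  then show ?thesis
    using override_on_profiles[OF p p'] by (metis order_refl)
qed

lemma Psi_override_on_ge:
  assumes p: "p \<in> profiles n Lam" and S: "S \<subseteq> {1..n}" and a: "a \<in> Lam"
    and q: "\<And>i. i \<in> S \<Longrightarrow> q i \<in> prob_measures Lam"
    and below: "\<And>i. i \<in> S \<Longrightarrow> cdf_on Lam (p i) a < Psi p a"
  shows "Psi p a \<le> Psi (override_on p q S) a"
  using finite_subset[OF S finite_atLeastAtMost] S below q
proof (induction S rule: finite_induct)
  case (insert j S)
  have j: "j \<in> {1..n}" and r: "override_on p q S \<in> profiles n Lam"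
    using insert.prems by (auto intro!: profile_override_onI[OF p])
  have IH: "Psi p a \<le> Psi (override_on p q S) a"
    using insert by simp
  have "cdf_on Lam (override_on p q S j) a = cdf_on Lam (p j) a"
    using insert.hyps(2) by simp
  also have "\<dots> < Psi p a"
    using insert.prems by simp
  finally have "Psi (override_on p q S) a \<le> Psi ((override_on p q S)(j := q j)) a"
    using Psi_update_ge[OF r j _ a] insert.prems IH by simp
  then show ?case
    unfolding override_on_insert using IH by linarith
qed simp

lemma Psi_override_on_le:
  assumes p: "p \<in> profiles n Lam" and S: "S \<subseteq> {1..n}" and a: "a \<in> Lam"
    and q: "\<And>i. i \<in> S \<Longrightarrow> q i \<in> prob_measures Lam"
    and above: "\<And>i. i \<in> S \<Longrightarrow> Psi p a < cdf_on Lam (p i) a"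
  shows "Psi (override_on p q S) a \<le> Psi p a"
  using finite_subset[OF S finite_atLeastAtMost] S above q
proof (induction S rule: finite_induct)
  case (insert j S)
  have j: "j \<in> {1..n}" and r: "override_on p q S \<in> profiles n Lam"
    using insert.prems by (auto intro!: profile_override_onI[OF p])
  have IH: "Psi (override_on p q S) a \<le> Psi p a"
    using insert by simp
  note IH
  also have "Psi p a < cdf_on Lam (p j) a"
    using insert.prems by simp
  also have "\<dots> = cdf_on Lam (override_on p q S j) a"
    using insert.hyps(2) by simp
  finally have "Psi ((override_on p q S)(j := q j)) a \<le> Psi (override_on p q S) a"
    using Psi_update_le[OF r j _ a] insert.prems by simp
  then show ?case
    unfolding override_on_insert using IH by linarith
qed simp

lemma phantom_eq:
  assumes a: "a \<in> Lam" and b: "b \<in> Lam" and c: "c \<in> Lam" and "c \<le> a" "a < b"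
  shows "phantom k a = Psi (step_profile c b k) a"
proof -
  define b' where "b' = (SOME b. b \<in> Lam \<and> a < b)"
  have b': "b' \<in> Lam" "a < b'"
    using someI_ex[of "\<lambda>b. b \<in> Lam \<and> a < b"] assms by (auto simp: b'_def)
  have "phantom k a = Psi (step_profile a b' k) a"
    using assms by (auto simp: phantom_def b'_def)
  also have "\<dots> = Psi (step_profile c b k) a"
    using assms b' by (intro Psi_eq_if_values_eq step_profile_in_profiles) (simp_all add: cdf_on_step_profile)
  finally show ?thesis .
qed

lemma phantom_Suc_ge:
  assumes a: "a \<in> Lam"
  shows "phantom k a \<le> phantom (Suc k) a"
proof (cases "\<exists>b\<in>Lam. a < b")
  case True
  then obtain b where b: "b \<in> Lam" "a < b"
    by blast
  show ?thesis
  proof (cases "Suc k \<le> n")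
    case True
    then have k: "Suc k \<in> {1..n}"
      by simp
    have "step_profile a b (Suc k) = (step_profile a b k)(Suc k := point_mass Lam a)"
      using k by (auto simp: step_profile_def fun_eq_iff)
    moreover have "cdf_on Lam (step_profile a b k (Suc k)) a = 0"
      using k a b by (simp add: cdf_on_step_profile)
    ultimately have "0 < Psi (step_profile a b k) a \<Longrightarrow> Psi (step_profile a b k) a \<le> Psi (step_profile a b (Suc k)) a"
      using Psi_update_ge[OF step_profile_in_profiles[OF a b(1)] k point_mass_in_prob_measures[OF a] a] by simp
    then show ?thesis
      using phantom_eq[OF a b(1) a order_refl b(2)] phantom_nonneg[OF a, of "Suc k"]
      by (cases "0 < Psi (step_profile a b k) a") auto
  next
    case False
    then have "step_profile a b (Suc k) = step_profile a b k"
      by (auto simp: step_profile_def)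
    then show ?thesis
      using phantom_eq[OF a b(1) a order_refl b(2)] by simp
  qed
qed (simp add: phantom_at_max)

lemma phantom_mono: "a \<in> Lam \<Longrightarrow> j \<le> k \<Longrightarrow> phantom j a \<le> phantom k a"
  using lift_Suc_mono_le[of "\<lambda>k. phantom k a"] phantom_Suc_ge by blast

lemma phantom_mono_point:
  assumes a: "a \<in> Lam" and a': "a' \<in> Lam" and "a \<le> a'"
  shows "phantom k a \<le> phantom k a'"
proof (cases "\<exists>b\<in>Lam. a' < b")
  case True
  then obtain b where b: "b \<in> Lam" "a' < b"
    by blast
  have "phantom k a = Psi (step_profile a b k) a"
    using assms b by (intro phantom_eq) auto
  also have "\<dots> \<le> Psi (step_profile a b k) a'"
    using assms b by (intro cdf_on_mono psi_in_prob_measures step_profile_in_profiles)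
  also have "\<dots> = phantom k a'"
    using assms b by (intro phantom_eq[symmetric]) auto
  finally show ?thesis .
qed (simp add: phantom_at_max phantom_le_one[OF a])

lemma phantom_right_continuous:
  assumes a: "a \<in> Lam"
  shows "(phantom k \<longlongrightarrow> phantom k a) (at a within (Lam \<inter> {a<..}))"
proof (cases "\<exists>b\<in>Lam. a < b")
  case True
  then obtain b where b: "b \<in> Lam" "a < b"
    by blast
  have "\<forall>\<^sub>F x in at a within (Lam \<inter> {a<..}). x \<in> Lam \<inter> {a<..}"
    by (simp add: eventually_at_filter)
  moreover have "\<forall>\<^sub>F x in at a within (Lam \<inter> {a<..}). x < b"
    using order_tendstoD(2)[OF tendsto_ident_at b(2)] .
  ultimately have "\<forall>\<^sub>F x in at a within (Lam \<inter> {a<..}). Psi (step_profile a b k) x = phantom k x"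
    by eventually_elim (use a b in \<open>auto intro: phantom_eq[symmetric]\<close>)
  moreover have "(Psi (step_profile a b k) \<longlongrightarrow> phantom k a) (at a within (Lam \<inter> {a<..}))"
    using cdf_on_right_continuous[OF psi_in_prob_measures[OF step_profile_in_profiles[OF a b(1)]]]
      phantom_eq[OF a b(1) a order_refl b(2)] by (auto intro: tendsto_within_subset)
  ultimately show ?thesis
    by (rule Lim_transform_eventually[rotated])
next
  case False
  then have "Lam \<inter> {a<..} = {}"
    by auto
  then show ?thesis
    by simp
qed

lemma phantom_top_eq:
  assumes c: "c \<in> Lam" and x: "x \<in> Lam" and "c \<le> x"
  shows "phantom n x = Psi (step_profile c c n) x"
proof (cases "\<exists>b\<in>Lam. x < b")
  case True
  then obtain b where "b \<in> Lam" "x < b"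
    by blast
  moreover have "step_profile c b n = step_profile c c n"
    unfolding step_profile_def by (rule restrict_ext) simp
  ultimately show ?thesis
    using phantom_eq assms by metis
qed (simp add: phantom_at_max cdf_on_at_max x psi_in_prob_measures step_profile_in_profiles c)

lemma phantom_bot_eq:
  assumes c: "c \<in> Lam" and x: "x \<in> Lam" and "x < c"
  shows "phantom 0 x = Psi (step_profile c c 0) x"
proof -
  have "step_profile x c 0 = step_profile c c 0"
    unfolding step_profile_def by (rule restrict_ext) simp
  then show ?thesis
    using phantom_eq[OF x c x order_refl \<open>x < c\<close>] by simp
qed

lemma tendsto_phantom_top:
  assumes c: "c \<in> Lam" and ev: "\<forall>\<^sub>F x in F. x \<in> Lam \<and> c \<le> x"
    and lim: "(Psi (step_profile c c n) \<longlongrightarrow> 1) F"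
  shows "(phantom n \<longlongrightarrow> 1) F"
  using eventually_mono[OF ev phantom_top_eq[OF c, symmetric]] lim
  by (auto intro: Lim_transform_eventually)

lemma tendsto_phantom_bot:
  assumes c: "c \<in> Lam" and ev: "\<forall>\<^sub>F x in F. x \<in> Lam \<and> x < c"
    and lim: "(Psi (step_profile c c 0) \<longlongrightarrow> 0) F"
  shows "(phantom 0 \<longlongrightarrow> 0) F"
  using eventually_mono[OF ev phantom_bot_eq[OF c, symmetric]] lim
  by (auto intro: Lim_transform_eventually)

lemma tendsto_phantom_Sup:
  assumes "Lam \<noteq> {}" "bdd_above Lam" "Sup Lam \<notin> Lam"
  shows "(phantom n \<longlongrightarrow> 1) (at (Sup Lam) within Lam)"
proof -
  obtain c where c: "c \<in> Lam"
    using assms(1) by blast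
  have "\<forall>\<^sub>F x in at (Sup Lam) within Lam. x \<in> Lam"
    by (simp add: eventually_at_filter)
  moreover have "\<forall>\<^sub>F x in at (Sup Lam) within Lam. c < x"
    using assms c cSup_upper[of c Lam] by (intro order_tendstoD(1)[OF tendsto_ident_at]) (auto simp: order_le_less)
  ultimately have "\<forall>\<^sub>F x in at (Sup Lam) within Lam. x \<in> Lam \<and> c \<le> x"
    by eventually_elim simp
  then show ?thesis
    by (rule tendsto_phantom_top[OF c])
      (intro tendsto_cdf_on_Sup psi_in_prob_measures step_profile_in_profiles c assms(2,3))
qed

lemma tendsto_phantom_at_top:
  assumes "Lam \<noteq> {}" "\<not> bdd_above Lam"
  shows "(phantom n \<longlongrightarrow> 1) (at_top \<sqinter> principal Lam)"
proof -
  obtain c where c: "c \<in> Lam"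
    using assms(1) by blast
  have "\<forall>\<^sub>F x in at_top \<sqinter> principal Lam. x \<in> Lam \<and> c \<le> x"
    unfolding eventually_inf_principal by (rule eventually_mono[OF eventually_ge_at_top[of c]]) simp
  then show ?thesis
    by (rule tendsto_phantom_top[OF c])
      (rule filterlim_mono[OF tendsto_cdf_on_at_top order_refl inf_le1],
       intro psi_in_prob_measures step_profile_in_profiles c)
qed

lemma tendsto_phantom_Inf:
  assumes "Lam \<noteq> {}" "bdd_below Lam" "Inf Lam \<notin> Lam"
  shows "(phantom 0 \<longlongrightarrow> 0) (at (Inf Lam) within Lam)"
proof -
  obtain c where c: "c \<in> Lam"
    using assms(1) by blast
  have "\<forall>\<^sub>F x in at (Inf Lam) within Lam. x \<in> Lam"
    by (simp add: eventually_at_filter)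
  moreover have "\<forall>\<^sub>F x in at (Inf Lam) within Lam. x < c"
    using assms c cInf_lower[of c Lam] by (intro order_tendstoD(2)[OF tendsto_ident_at]) (auto simp: order_le_less)
  ultimately have "\<forall>\<^sub>F x in at (Inf Lam) within Lam. x \<in> Lam \<and> x < c"
    by eventually_elim simp
  then show ?thesis
    by (rule tendsto_phantom_bot[OF c])
      (intro tendsto_cdf_on_Inf psi_in_prob_measures step_profile_in_profiles c assms(2,3))
qed

lemma tendsto_phantom_at_bot:
  assumes "Lam \<noteq> {}" "\<not> bdd_below Lam"
  shows "(phantom 0 \<longlongrightarrow> 0) (at_bot \<sqinter> principal Lam)"
proof -
  obtain c where c: "c \<in> Lam"
    using assms(1) by blast
  have "\<forall>\<^sub>F x in at_bot \<sqinter> principal Lam. x \<in> Lam \<and> x < c"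
    unfolding eventually_inf_principal by (rule eventually_mono[OF eventually_gt_at_bot[of c]]) simp
  then show ?thesis
    by (rule tendsto_phantom_bot[OF c])
      (rule filterlim_mono[OF tendsto_cdf_on_at_bot order_refl inf_le1],
       intro psi_in_prob_measures step_profile_in_profiles c)
qed

lemma phantom_0_if_unanimous:
  assumes "unanimous n Lam psi" and a: "a \<in> Lam" and b: "b \<in> Lam" "a < b"
  shows "phantom 0 a = 0"
proof -
  have "step_profile a b 0 = (\<lambda>i\<in>{1..n}. point_mass Lam b)"
    unfolding step_profile_def by (rule restrict_ext) simp
  then have "psi (step_profile a b 0) = point_mass Lam b"
    using assms point_mass_in_prob_measures[OF b(1)] by (simp add: unanimous_def)
  then show ?thesis
    using phantom_eq[OF a b(1) a order_refl b(2)] b by (simp add: cdf_on_point_mass[OF Lam_borel])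
qed

lemma phantom_n_if_unanimous:
  assumes "unanimous n Lam psi" and a: "a \<in> Lam"
  shows "phantom n a = 1"
proof -
  have "step_profile a a n = (\<lambda>i\<in>{1..n}. point_mass Lam a)"
    unfolding step_profile_def by (rule restrict_ext) simp
  then have "psi (step_profile a a n) = point_mass Lam a"
    using assms point_mass_in_prob_measures[OF a] by (simp add: unanimous_def)
  then show ?thesis
    using phantom_top_eq[OF a a order_refl] a by (simp add: cdf_on_point_mass[OF Lam_borel])
qed

end

section \<open>Anonymous Level-SP aggregators satisfy the median formula\<close>

locale anonymous_level_sp_paf = level_sp_paf +
  assumes anonymous: "anonymous n Lam psi"
begin

lemma Psi_eq_if_value_msets_eq:
  assumes p: "p \<in> profiles n Lam" and p': "p' \<in> profiles n Lam" and a: "a \<in> Lam"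
    and eq: "image_mset (\<lambda>i. cdf_on Lam (p i) a) (mset_set {1..n})
           = image_mset (\<lambda>i. cdf_on Lam (p' i) a) (mset_set {1..n})"
  shows "Psi p a = Psi p' a"
proof -
  obtain \<sigma> where \<sigma>: "\<sigma> permutes {1..n}"
    and same_values: "\<forall>i\<in>{1..n}. cdf_on Lam (p i) a = cdf_on Lam (p' (\<sigma> i)) a"
    using image_mset_eq_implies_permutes[OF finite_atLeastAtMost eq] by blast
  define r where "r = (\<lambda>i\<in>{1..n}. p' (\<sigma> i))"
  have r: "r \<in> profiles n Lam"
    unfolding r_def by (rule profile_restrictI) (use permutes_in_image[OF \<sigma>] profile_apply[OF p'] in blast)
  have "Psi p a = Psi r a"
    using same_values by (intro Psi_eq_if_values_eq[OF r p a]) (simp add: r_def)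
  also have "\<dots> = Psi p' a"
    using anonymous \<sigma> p' by (simp add: anonymous_def r_def)
  finally show ?thesis .
qed

lemma Psi_zero_one:
  assumes p: "p \<in> profiles n Lam" and a: "a \<in> Lam" and b: "b \<in> Lam" "a < b"
    and zero_one: "\<And>i. i \<in> {1..n} \<Longrightarrow> cdf_on Lam (p i) a \<in> {0, 1}"
  shows "Psi p a = phantom (card {i \<in> {1..n}. cdf_on Lam (p i) a = 1}) a"
proof -
  define k where "k = card {i \<in> {1..n}. cdf_on Lam (p i) a = 1}"
  have "k \<le> n"
    unfolding k_def using card_mono[of "{1..n}" "{i \<in> {1..n}. cdf_on Lam (p i) a = 1}"] by (simp add: subset_iff)
  have step_values: "cdf_on Lam (step_profile a b k i) a = (if i \<le> k then 1 else 0)" if "i \<in> {1..n}" for i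
    using that a b by (simp add: cdf_on_step_profile)
  have "{i \<in> {1..n}. cdf_on Lam (step_profile a b k i) a = 1} = {1..k}"
    using \<open>k \<le> n\<close> by (auto simp: step_values split: if_splits)
  then have ones: "card {i \<in> {1..n}. cdf_on Lam (step_profile a b k i) a = 1} = k"
    by simp
  have "Psi p a = Psi (step_profile a b k) a"
  proof (intro Psi_eq_if_value_msets_eq[OF p step_profile_in_profiles[OF a b(1)] a]
      image_mset_zero_one_eqI)
    show "(\<lambda>i. cdf_on Lam (p i) a) ` {1..n} \<subseteq> {0, 1}"
      using zero_one by blast
    show "(\<lambda>i. cdf_on Lam (step_profile a b k i) a) ` {1..n} \<subseteq> {0, 1}"
      using step_values by (auto simp: image_subset_iff)
    show "card {i \<in> {1..n}. cdf_on Lam (p i) a = 1} = card {i \<in> {1..n}. cdf_on Lam (step_profile a b k i) a = 1}"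
      using ones unfolding k_def by simp
  qed simp
  also have "\<dots> = phantom k a"
    using phantom_eq[OF a b(1) a order_refl b(2)] by simp
  finally show ?thesis
    by (simp add: k_def)
qed

text \<open>Sending the experts above the outcome to \<open>\<delta>\<^sub>a\<close> cannot raise it, and then sending all
  others to \<open>\<delta>\<^sub>b\<close> cannot raise it either: they are now below it, so undoing this move could not
  lower the outcome. The final profile has only the values \<open>0\<close> and \<open>1\<close> at \<open>a\<close>.\<close>
lemma phantom_card_above_le:
  assumes p: "p \<in> profiles n Lam" and a: "a \<in> Lam"
  shows "phantom (card {i \<in> {1..n}. Psi p a < cdf_on Lam (p i) a}) a \<le> Psi p a"
proof (cases "\<exists>b\<in>Lam. a < b")
  case True
  then obtain b where b: "b \<in> Lam" "a < b"
    by blast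
  define U where "U = {i \<in> {1..n}. Psi p a < cdf_on Lam (p i) a}"
  define r where "r = override_on p (\<lambda>_. point_mass Lam a) U"
  define s where "s = override_on r (\<lambda>_. point_mass Lam b) ({1..n} - U)"
  have U: "U \<subseteq> {1..n}"
    by (auto simp: U_def)
  have r: "r \<in> profiles n Lam" and s: "s \<in> profiles n Lam"
    using U a b by (auto simp: r_def s_def intro!: profile_override_onI point_mass_in_prob_measures p)
  have s_values: "cdf_on Lam (s i) a = (if i \<in> U then 1 else 0)" if "i \<in> {1..n}" for i
    using that a b by (simp add: s_def r_def cdf_on_point_mass[OF Lam_borel])
  have "Psi r a \<le> Psi p a"
    unfolding r_def by (rule Psi_override_on_le[OF p U a]) (auto simp: U_def point_mass_in_prob_measures a)
  moreover have "Psi s a \<le> Psi r a"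
  proof (cases "0 < Psi s a")
    case True
    have "Psi s a \<le> Psi (override_on s r ({1..n} - U)) a"
      using True s_values by (intro Psi_override_on_ge[OF s _ a] profile_apply[OF r]) auto
    then show ?thesis
      by (simp add: s_def override_on_restore)
  next
    case False
    then show ?thesis
      using cdf_on_nonneg[OF psi_in_prob_measures[OF r], of a] by linarith
  qed
  moreover have "{i \<in> {1..n}. cdf_on Lam (s i) a = 1} = U"
    using U s_values by (auto split: if_splits)
  then have "Psi s a = phantom (card U) a"
    using Psi_zero_one[OF s a b] s_values by simp
  ultimately show ?thesis
    by (simp add: U_def)
qed (simp add: phantom_at_max cdf_on_at_max psi_in_prob_measures p a)

lemma le_phantom_card_at_least:
  assumes p: "p \<in> profiles n Lam" and a: "a \<in> Lam"
  shows "Psi p a \<le> phantom (card {i \<in> {1..n}. Psi p a \<le> cdf_on Lam (p i) a}) a"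
proof (cases "\<exists>b\<in>Lam. a < b")
  case True
  then obtain b where b: "b \<in> Lam" "a < b"
    by blast
  define W where "W = {i \<in> {1..n}. Psi p a \<le> cdf_on Lam (p i) a}"
  define r where "r = override_on p (\<lambda>_. point_mass Lam b) ({1..n} - W)"
  define s where "s = override_on r (\<lambda>_. point_mass Lam a) W"
  have W: "W \<subseteq> {1..n}"
    by (auto simp: W_def)
  have r: "r \<in> profiles n Lam" and s: "s \<in> profiles n Lam"
    using W a b by (auto simp: r_def s_def intro!: profile_override_onI point_mass_in_prob_measures p)
  have s_values: "cdf_on Lam (s i) a = (if i \<in> W then 1 else 0)" if "i \<in> {1..n}" for i
    using that a b by (simp add: s_def r_def cdf_on_point_mass[OF Lam_borel])
  have "Psi p a \<le> Psi r a"
    unfolding r_def by (rule Psi_override_on_ge[OF p _ a]) (auto simp: W_def point_mass_in_prob_measures b)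
  moreover have "Psi r a \<le> Psi s a"
  proof (cases "Psi s a < 1")
    case True
    have "Psi (override_on s r W) a \<le> Psi s a"
      using True s_values W by (intro Psi_override_on_le[OF s W a] profile_apply[OF r]) auto
    then show ?thesis
      by (simp add: s_def override_on_restore)
  next
    case False
    then show ?thesis
      using cdf_on_le_one[OF psi_in_prob_measures[OF r], of a] by linarith
  qed
  moreover have "{i \<in> {1..n}. cdf_on Lam (s i) a = 1} = W"
    using W s_values by (auto split: if_splits)
  then have "Psi s a = phantom (card W) a"
    using Psi_zero_one[OF s a b] s_values by simp
  ultimately show ?thesis
    by (simp add: W_def)
qed (simp add: phantom_at_max cdf_on_le_one psi_in_prob_measures p)

lemma Psi_median_phantom:
  assumes "p \<in> profiles n Lam" "a \<in> Lam"
  shows "Psi p a = median (map (\<lambda>i. cdf_on Lam (p i) a) [1..<n+1] @ map (\<lambda>k. phantom k a) [0..<n+1])"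
  using median_phantoms_eqI[OF phantom_mono phantom_card_above_le le_phantom_card_at_least] assms
  by simp

lemma phantom_conds_phantom:
  assumes "Lam \<noteq> {}"
  shows "phantom_conds n Lam psi phantom"
  unfolding phantom_conds_def
proof (intro conjI allI impI ballI)
  fix k a assume "a \<in> Lam"
  then show "0 \<le> phantom k a" "phantom k a \<le> 1"
    by (simp_all add: phantom_nonneg phantom_le_one)
next
  fix k a b assume "a \<in> Lam" "b \<in> Lam" "a \<le> b"
  then show "phantom k a \<le> phantom k b"
    by (rule phantom_mono_point)
next
  fix k a assume "a \<in> Lam"
  then show "(phantom k \<longlongrightarrow> phantom k a) (at a within Lam \<inter> {a<..})"
    by (rule phantom_right_continuous)
next
  fix k a assume "a \<in> Lam"
  then show "phantom k a \<le> phantom (Suc k) a"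
    by (rule phantom_Suc_ge)
next
  assume "bdd_above Lam \<and> Sup Lam \<in> Lam"
  then show "phantom n (Sup Lam) = 1"
    by (meson cSup_upper not_le phantom_at_max)
next
  assume "bdd_above Lam \<and> Sup Lam \<notin> Lam"
  then show "(phantom n \<longlongrightarrow> 1) (at (Sup Lam) within Lam)"
    using tendsto_phantom_Sup[OF assms] by blast
next
  assume "\<not> bdd_above Lam"
  then show "(phantom n \<longlongrightarrow> 1) (at_top \<sqinter> principal Lam)"
    by (rule tendsto_phantom_at_top[OF assms])
next
  assume "bdd_below Lam \<and> Inf Lam \<notin> Lam"
  then show "(phantom 0 \<longlongrightarrow> 0) (at (Inf Lam) within Lam)"
    using tendsto_phantom_Inf[OF assms] by blast
next
  assume "\<not> bdd_below Lam"
  then show "(phantom 0 \<longlongrightarrow> 0) (at_bot \<sqinter> principal Lam)"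
    by (rule tendsto_phantom_at_bot[OF assms])
next
  fix p a assume "p \<in> profiles n Lam" "a \<in> Lam"
  then show "Psi p a = median (map (\<lambda>i. cdf_on Lam (p i) a) [1..<n+1] @ map (\<lambda>k. phantom k a) [0..<n+1])"
    by (rule Psi_median_phantom)
qed

text \<open>For a unanimous rule the phantom \<open>f\<^sub>0\<close> may be lowered to \<open>0\<close>: it vanishes anyway except at
  the maximum of \<open>Lam\<close>, where all experts report \<open>1\<close>.\<close>
definition unanimous_phantom :: "nat \<Rightarrow> real \<Rightarrow> real" where
  "unanimous_phantom k a = (if k = 0 then 0 else phantom k a)"

lemma unanimous_phantom_0: "unanimous_phantom 0 = (\<lambda>_. 0)"
  by (simp add: unanimous_phantom_def fun_eq_iff)

lemma unanimous_phantom_pos: "k \<noteq> 0 \<Longrightarrow> unanimous_phantom k = phantom k"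
  by (simp add: unanimous_phantom_def fun_eq_iff)

lemma Psi_median_unanimous_phantom:
  assumes un: "unanimous n Lam psi" and "n \<ge> 1" and p: "p \<in> profiles n Lam" and a: "a \<in> Lam"
  shows "Psi p a = median (map (\<lambda>i. cdf_on Lam (p i) a) [1..<n+1] @ map (\<lambda>k. unanimous_phantom k a) [0..<n+1])"
proof (rule median_phantoms_eqI[symmetric])
  show "unanimous_phantom j a \<le> unanimous_phantom k a" if "j \<le> k" for j k
    using that phantom_mono[OF a] phantom_nonneg[OF a] by (simp add: unanimous_phantom_def)
  show "unanimous_phantom (card {i \<in> {1..n}. Psi p a < cdf_on Lam (p i) a}) a \<le> Psi p a"
    using phantom_card_above_le[OF p a] cdf_on_nonneg[OF psi_in_prob_measures[OF p]]
    by (simp add: unanimous_phantom_def)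
  define W where "W = {i \<in> {1..n}. Psi p a \<le> cdf_on Lam (p i) a}"
  have "Psi p a \<le> phantom 0 a" if "card W = 0"
    using le_phantom_card_at_least[OF p a] that unfolding W_def[symmetric] by simp
  moreover have "\<exists>b\<in>Lam. a < b" if "card W = 0"
  proof (rule ccontr)
    assume "\<not> (\<exists>b\<in>Lam. a < b)"
    then have "W = {1..n}"
      using cdf_on_at_max[OF psi_in_prob_measures[OF p] a] cdf_on_at_max[OF profile_apply[OF p] a]
      by (auto simp: W_def)
    then show False
      using that \<open>n \<ge> 1\<close> by simp
  qed
  ultimately show "Psi p a \<le> unanimous_phantom (card W) a"
    using le_phantom_card_at_least[OF p a] phantom_0_if_unanimous[OF un a]
    by (auto simp: unanimous_phantom_def W_def)
qed

lemma unanimous_phantom_extremes: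
  assumes "unanimous n Lam psi" "n \<ge> 1" "a \<in> Lam"
  shows "unanimous_phantom 0 a = 0" "unanimous_phantom n a = 1"
  using assms phantom_n_if_unanimous by (simp_all add: unanimous_phantom_def)

lemma phantom_conds_unanimous_phantom:
  assumes un: "unanimous n Lam psi" and "n \<ge> 1"
  shows "phantom_conds n Lam psi unanimous_phantom"
  unfolding phantom_conds_def
proof (intro conjI allI impI ballI)
  fix k a assume "a \<in> Lam"
  then show "0 \<le> unanimous_phantom k a" "unanimous_phantom k a \<le> 1"
    by (simp_all add: unanimous_phantom_def phantom_nonneg phantom_le_one)
next
  fix k a b assume "a \<in> Lam" "b \<in> Lam" "a \<le> b"
  then show "unanimous_phantom k a \<le> unanimous_phantom k b"
    by (simp add: unanimous_phantom_def phantom_mono_point)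
next
  fix k a assume "a \<in> Lam"
  then show "(unanimous_phantom k \<longlongrightarrow> unanimous_phantom k a) (at a within Lam \<inter> {a<..})"
    by (cases "k = 0") (simp_all add: unanimous_phantom_0 unanimous_phantom_pos phantom_right_continuous)
next
  fix k a assume "a \<in> Lam"
  then show "unanimous_phantom k a \<le> unanimous_phantom (Suc k) a"
    by (simp add: unanimous_phantom_def phantom_Suc_ge phantom_nonneg)
next
  show "unanimous_phantom n (Sup Lam) = 1" if "bdd_above Lam \<and> Sup Lam \<in> Lam"
    using that \<open>n \<ge> 1\<close> phantom_n_if_unanimous[OF un] by (simp add: unanimous_phantom_def)
  have top: "\<forall>\<^sub>F x in F. 1 = unanimous_phantom n x" if "\<forall>\<^sub>F x in F. x \<in> Lam" for F
    using that by eventually_elim (use \<open>n \<ge> 1\<close> phantom_n_if_unanimous[OF un] in \<open>simp add: unanimous_phantom_def\<close>)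
  show "(unanimous_phantom n \<longlongrightarrow> 1) (at (Sup Lam) within Lam)"
    by (rule Lim_transform_eventually[OF tendsto_const top]) (simp add: eventually_at_filter)
  show "(unanimous_phantom n \<longlongrightarrow> 1) (at_top \<sqinter> principal Lam)"
    by (rule Lim_transform_eventually[OF tendsto_const top]) (simp add: eventually_inf_principal)
next
  have "(unanimous_phantom 0 \<longlongrightarrow> 0) F" for F
    by (simp add: unanimous_phantom_0)
  then show "(unanimous_phantom 0 \<longlongrightarrow> 0) (at (Inf Lam) within Lam)"
    "(unanimous_phantom 0 \<longlongrightarrow> 0) (at_bot \<sqinter> principal Lam)"
    by blast+
next
  fix p a assume "p \<in> profiles n Lam" "a \<in> Lam"
  then show "Psi p a = median (map (\<lambda>i. cdf_on Lam (p i) a) [1..<n+1] @ map (\<lambda>k. unanimous_phantom k a) [0..<n+1])"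
    using Psi_median_unanimous_phantom[OF un \<open>n \<ge> 1\<close>] by blast
qed

end

theorem mainTheorem2:
  fixes n :: nat and Lam :: "real set"
    and psi :: "(nat \<Rightarrow> real measure) \<Rightarrow> real measure"
  assumes "n \<ge> 1"
    and "Lam \<in> sets borel" and "Lam \<noteq> {}"
    and "is_PAF n Lam psi"
  shows "(level_SP n Lam psi \<and> anonymous n Lam psi \<longleftrightarrow> (\<exists>f. phantom_conds n Lam psi f))
     \<and> (level_SP n Lam psi \<and> anonymous n Lam psi \<longrightarrow>
          (unanimous n Lam psi \<longleftrightarrow>
             (\<exists>f. phantom_conds n Lam psi f \<and> (\<forall>a \<in> Lam. f 0 a = 0 \<and> f n a = 1))))"
proof -
  interpret paf n Lam psi
    using assms(2,4) by unfold_locales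
  have phantoms_exist: "\<exists>f. phantom_conds n Lam psi f \<and>
      (unanimous n Lam psi \<longrightarrow> (\<forall>a \<in> Lam. f 0 a = 0 \<and> f n a = 1))"
    if "level_SP n Lam psi" "anonymous n Lam psi"
  proof -
    interpret anonymous_level_sp_paf n Lam psi
      using that by unfold_locales
    show ?thesis
    proof (cases "unanimous n Lam psi")
      case True
      then show ?thesis
        using phantom_conds_unanimous_phantom unanimous_phantom_extremes assms(1) by blast
    next
      case False
      then show ?thesis
        using phantom_conds_phantom[OF assms(3)] by blast
    qed
  qed
  show ?thesis
    using phantoms_exist level_SP_if_phantom_conds anonymous_if_phantom_conds
      unanimous_if_phantom_conds by blast
qed

end
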